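(* Let $p$ be a prime, let $\lambda$ be a partition, and write $r(\lambda)=(r_1,\ldots,r_{p-1})$. Then $c^{(p)}_\lambda\neq 0$ if and only if both of the following hold: (i) $p\nmid|\lambda|$; (ii) there exists $a\in\{1,\ldots,p-1\}$ with $r_a=\max r(\lambda)$ such that $\max r(\lambda)\leq |{}^b r(\lambda)|_p$, where $b\in\{1,\ldots,p-1\}$ satisfies $ab\equiv 1 \pmod p$.
   Context: A composition of $n\in\mathbb{N}_0$ is a finite sequence $\delta=(\delta_1,\ldots,\delta_s)$ of positive integers with $\sum_i\delta_i=n$; write $\ell(\delta)=s$, $|\delta|=n$; the unique composition of $0$ is the empty composition. A partition is a composition with $\delta_1\geq\cdots\geq\delta_s$. Partial sums: $\delta^+_j=\sum_{i=1}^j\delta_i$. For a positive integer $d$, $n_d(\delta)=|\{i:\delta_i=d\}|$. For a positive integer $q$, a composition $\delta$ is called $q'$-cumulative if it is nonempty and $q\nmid\delta^+_j$ for all $1\leq j\leq\ell(\delta)$ (the empty composition is not regarded as $q'$-cumulative). For a partition $\lambda$, $\mathscr{C}(\lambda)$ is the set of compositions that are rearrangements of $\lambda$, and $c^{(q)}_\lambda$ is the number of $q'$-cumulative $\delta\in\mathscr{C}(\lambda)$. For $0\leq j\leq q-1$, $r_j(\delta)=\sum_{i\equiv j \,(\mathrm{mod}\ q)}n_i(\delta)$, and $r(\delta)=(r_1(\delta),\ldots,r_{q-1}(\delta))\in\mathbb{N}_0^{q-1}$. For $\mathbf{r}=(r_1,\ldots,r_{q-1})\in\mathbb{N}_0^{q-1}$: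 $|\mathbf{r}|_q=(q-1)+\sum_{i=2}^{q-1}(q-i)r_i$, $\max\mathbf{r}=\max\{r_1,\ldots,r_{q-1}\}$, and for $a$ invertible modulo $q$, ${}^a\mathbf{r}=(r'_1,\ldots,r'_{q-1})$ where $r'_j=r_i$ whenever $j\equiv ai \pmod q$ ($1\le i,j\le q-1$). *)

theory Defs
  imports Main "HOL-Library.Multiset" "HOL-Number_Theory.Cong"
begin

definition is_composition :: "nat list \<Rightarrow> bool" where
  "is_composition \<delta> \<longleftrightarrow> (\<forall>x\<in>set \<delta>. 0 < x)"

definition is_partition :: "nat list \<Rightarrow> bool" where
  "is_partition lam \<longleftrightarrow> is_composition lam \<and> sorted_wrt (\<ge>) lam"

definition psum :: "nat list \<Rightarrow> nat \<Rightarrow> nat" where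
  "psum \<delta> j = sum_list (take j \<delta>)"

definition cumulative :: "nat \<Rightarrow> nat list \<Rightarrow> bool" where
  "cumulative q \<delta> \<longleftrightarrow> \<delta> \<noteq> [] \<and> (\<forall>j\<in>{1..length \<delta>}. \<not> q dvd psum \<delta> j)"

definition rearrangements :: "nat list \<Rightarrow> nat list set" where
  "rearrangements lam = {\<delta>. mset \<delta> = mset lam}"

definition cnum :: "nat \<Rightarrow> nat list \<Rightarrow> nat" where
  "cnum q lam = card {\<delta> \<in> rearrangements lam. cumulative q \<delta>}"

definition nmult :: "nat \<Rightarrow> nat list \<Rightarrow> nat" where
  "nmult d \<delta> = card {i. i < length \<delta> \<and> \<delta> ! i = d}"

definition rvec :: "nat \<Rightarrow> nat list \<Rightarrow> nat \<Rightarrow> nat" where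
  "rvec q \<delta> j = (\<Sum>i\<in>{i\<in>set \<delta>. [i = j] (mod q)}. nmult i \<delta>)"

text \<open>Vectors r in N_0^(q-1) are functions nat => nat, only the entries 1..q-1 matter.\<close>
definition qnorm :: "nat \<Rightarrow> (nat \<Rightarrow> nat) \<Rightarrow> nat" where
  "qnorm q r = (q - 1) + (\<Sum>i=2..q-1. (q - i) * r i)"

definition vmax :: "nat \<Rightarrow> (nat \<Rightarrow> nat) \<Rightarrow> nat" where
  "vmax q r = Max (r ` {1..q-1})"

definition twist :: "nat \<Rightarrow> nat \<Rightarrow> (nat \<Rightarrow> nat) \<Rightarrow> nat \<Rightarrow> nat" where
  "twist q a r j = r (THE i. i \<in> {1..q-1} \<and> [j = a * i] (mod q))"

end

theory Submission
  imports Defs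
begin

text \<open>Fix a unit b modulo p. Along a cumulative arrangement the scaled partial sums
  (b * partial sum) mod p never vanish; a part of scaled residue 1 raises this residue by
  exactly 1, while a part of scaled residue i \<ge> 2 lowers it by at most its defect p - i.
  So the parts in the class of the inverse a of b number at most p - 1 plus the total
  defect, which is the inequality r_a \<le> |^b r|_p.

  Conversely, assume p does not divide the total and these inequalities hold for every unit.
  For the units other than the one of the most frequent class they hold automatically, since
  every part of that class has positive defect for them. Removing a suitable part preserves
  the conditions: a multiple of p if there is one, otherwise a part of the most frequent class
  a, unless the total is congruent to a. In that case the congruence
  total defect + b * total \<equiv> class count (mod p) bounds the class count by the total defect
  plus one, and any part outside the class can be removed. Induction then builds the
  arrangement from its last part backwards.\<close>

section \<open>Units modulo a prime\<close>

lemma not_dvd_if_in_units: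
  fixes p b :: nat
  assumes "b \<in> {1..p-1}"
  shows "\<not> p dvd b"
  using assms by (auto dest: dvd_imp_le)

lemma coprime_if_in_units:
  fixes p b :: nat
  assumes "prime p" and "b \<in> {1..p-1}"
  shows "coprime b p"
  using prime_imp_coprime[OF assms(1) not_dvd_if_in_units[OF assms(2)]] by (simp add: coprime_commute)

lemma prime_inverse_exists:
  fixes p a :: nat
  assumes "prime p" and "\<not> p dvd a"
  obtains b where "b \<in> {1..p-1}" and "[a * b = 1] (mod p)"
proof -
  have "coprime a p"
    using prime_imp_coprime[OF assms] by (simp add: coprime_commute)
  then obtain b0 where b0: "[a * b0 = 1] (mod p)"
    using cong_solve_coprime_nat by auto
  have p2: "2 \<le> p" using assms(1) prime_ge_2_nat by blast
  have inv: "[a * (b0 mod p) = 1] (mod p)"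
    by (metis b0 cong_def mod_mult_right_eq)
  have "b0 mod p \<noteq> 0"
  proof
    assume "b0 mod p = 0"
    with inv p2 show False by (simp add: cong_def)
  qed
  moreover have "b0 mod p < p"
    using p2 by simp
  ultimately have "b0 mod p \<in> {1..p-1}"
    by auto
  then show ?thesis using inv by (rule that)
qed

lemma prime_mult_mod_ne_0:
  fixes p b y :: nat
  assumes "prime p" and "b \<in> {1..p-1}" and "\<not> p dvd y"
  shows "(b * y) mod p \<noteq> 0"
  by (metis assms dvd_eq_mod_eq_0 prime_dvd_mult_iff not_dvd_if_in_units)

lemma prime_mult_cancel_units:
  fixes p b c y :: nat
  assumes "prime p" and "b \<in> {1..p-1}" and "c \<in> {1..p-1}" and "\<not> p dvd y"
    and "(b * y) mod p = (c * y) mod p"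
  shows "b = c"
proof -
  have "coprime y p"
    using prime_imp_coprime[OF assms(1,4)] by (simp add: coprime_commute)
  then have "[b = c] (mod p)"
    using assms(5) cong_mult_rcancel_nat unfolding cong_def by blast
  then show ?thesis
    using assms(2,3) cong_less_modulus_unique_nat by auto
qed

section \<open>Class counts and defects\<close>

text \<open>For a unit b with inverse a, class_count p b 1 counts the parts congruent to a, i.e. it is
  r_a; class_count p b i is the entry i of ^b r, and p - 1 + defect_sum p b is |^b r|_p.\<close>

definition class_count :: "nat \<Rightarrow> nat \<Rightarrow> nat \<Rightarrow> nat multiset \<Rightarrow> nat" where
  "class_count p b i M = size {#y \<in># M. (b * y) mod p = i#}"

definition defect :: "nat \<Rightarrow> nat \<Rightarrow> nat \<Rightarrow> nat" where
  "defect p b y = (if (b * y) mod p \<le> 1 then 0 else p - (b * y) mod p)"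

definition defect_sum :: "nat \<Rightarrow> nat \<Rightarrow> nat multiset \<Rightarrow> nat" where
  "defect_sum p b M = (\<Sum>y\<in>#M. defect p b y)"

definition admissible :: "nat \<Rightarrow> nat multiset \<Rightarrow> bool" where
  "admissible p M \<longleftrightarrow> \<not> p dvd \<Sum>\<^sub># M \<and>
     (\<forall>b\<in>{1..p-1}. class_count p b 1 M \<le> p - 1 + defect_sum p b M)"

lemma class_count_empty [simp]: "class_count p b i {#} = 0"
  by (simp add: class_count_def)

lemma class_count_add_mset [simp]:
  "class_count p b i (add_mset y M) = class_count p b i M + (if (b * y) mod p = i then 1 else 0)"
  by (simp add: class_count_def)

lemma defect_sum_empty [simp]: "defect_sum p b {#} = 0"
  by (simp add: defect_sum_def)

lemma defect_sum_add_mset [simp]: "defect_sum p b (add_mset y M) = defect p b y + defect_sum p b M"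
  by (simp add: defect_sum_def)

lemma defect_le: "defect p b y \<le> p - 2"
  unfolding defect_def by (auto intro: diff_le_mono2)

lemma defect_pos:
  assumes "prime p" and "b \<in> {1..p-1}" and "\<not> p dvd y" and "(b * y) mod p \<noteq> 1"
  shows "1 \<le> defect p b y"
proof -
  have "(b * y) mod p \<noteq> 0"
    using prime_mult_mod_ne_0[OF assms(1-3)] .
  moreover have "(b * y) mod p < p"
    using assms(1) prime_gt_0_nat by simp
  ultimately show ?thesis
    using assms(4) by (simp add: defect_def)
qed

lemma defect_add_cong:
  assumes "0 < p"
  shows "[defect p b y + b * y = (if (b * y) mod p = 1 then 1 else 0)] (mod p)"
proof (cases "(b * y) mod p \<le> 1")
  case True
  then show ?thesis
    by (auto simp: cong_def defect_def le_Suc_eq)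
next
  case False
  have "(b * y) mod p < p" using assms by simp
  moreover have "defect p b y = p - (b * y) mod p"
    using False by (simp add: defect_def)
  moreover have "b * y div p * p + (b * y) mod p = b * y"
    by (rule div_mult_mod_eq)
  ultimately have "defect p b y + b * y = (b * y div p) * p + p"
    by linarith
  with False show ?thesis
    by (simp add: cong_def)
qed

lemma defect_sum_add_cong:
  assumes "0 < p"
  shows "[defect_sum p b M + b * \<Sum>\<^sub># M = class_count p b 1 M] (mod p)"
proof (induction M)
  case empty then show ?case by simp
next
  case (add y M)
  have "[defect p b y + b * y + (defect_sum p b M + b * \<Sum>\<^sub># M)
        = (if (b * y) mod p = 1 then 1 else 0) + class_count p b 1 M] (mod p)"
    using cong_add[OF defect_add_cong[OF assms] add.IH] .
  then show ?case
    by (simp add: algebra_simps)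
qed

lemma class_count_le_defect_sum:
  assumes "prime p" and "b \<in> {1..p-1}" and "c \<in> {1..p-1}" and "b \<noteq> c"
  shows "class_count p b 1 M \<le> defect_sum p c M"
proof (induction M)
  case empty then show ?case by simp
next
  case (add y M)
  have "1 \<le> defect p c y" if "(b * y) mod p = 1"
  proof (rule defect_pos[OF assms(1,3)])
    show "\<not> p dvd y"
    proof
      assume "p dvd y"
      then have "(b * y) mod p = 0" by (simp add: mod_eq_0_iff_dvd)
      with that show False by simp
    qed
    then show "(c * y) mod p \<noteq> 1"
      using that assms prime_mult_cancel_units by metis
  qed
  with add.IH show ?case by auto
qed

lemma class_count_pos_iff: "0 < class_count p b i M \<longleftrightarrow> (\<exists>x\<in>#M. (b * x) mod p = i)"
  by (induction M) auto

section \<open>Necessity\<close>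

lemma cumulative_snoc:
  "cumulative q (\<delta> @ [x]) \<longleftrightarrow>
     (\<forall>j\<in>{1..length \<delta>}. \<not> q dvd psum \<delta> j) \<and> \<not> q dvd sum_list \<delta> + x"
proof -
  have "{1..length (\<delta> @ [x])} = insert (Suc (length \<delta>)) {1..length \<delta>}"
    by auto
  moreover have "psum (\<delta> @ [x]) (Suc (length \<delta>)) = sum_list \<delta> + x"
    by (simp add: psum_def)
  moreover have "(\<forall>j\<in>{1..length \<delta>}. \<not> q dvd psum (\<delta> @ [x]) j) \<longleftrightarrow>
      (\<forall>j\<in>{1..length \<delta>}. \<not> q dvd psum \<delta> j)"
    by (auto simp: psum_def)
  ultimately show ?thesis
    unfolding cumulative_def by auto
qed

lemma scaled_sum_step:
  assumes "0 < p" and "(b * (S + y)) mod p \<noteq> 0"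
  shows "(b * S) mod p + (if (b * y) mod p = 1 then 1 else 0) \<le> (b * (S + y)) mod p + defect p b y"
proof -
  define s r where "s = (b * S) mod p" and "r = (b * y) mod p"
  have "s < p" "r < p"
    using assms(1) by (simp_all add: s_def r_def)
  have sum: "(b * (S + y)) mod p = (s + r) mod p"
    by (simp add: s_def r_def distrib_left mod_add_eq)
  have "s + (if r = 1 then 1 else 0) \<le> (s + r) mod p + (if r \<le> 1 then 0 else p - r)"
  proof (cases "s + r < p")
    case True
    then show ?thesis by simp
  next
    case False
    then have "(s + r) mod p = s + r - p"
      using \<open>s < p\<close> \<open>r < p\<close> by (simp add: le_mod_geq)
    moreover have "r \<noteq> 1"
    proof
      assume "r = 1"
      with False \<open>s < p\<close> have "s + r = p" by simp
      with assms(2) sum show False by simp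
    qed
    ultimately show ?thesis
      using False \<open>s < p\<close> by auto
  qed
  then show ?thesis
    unfolding sum defect_def s_def [symmetric] r_def [symmetric] .
qed

lemma class_count_le_scaled_sum:
  assumes "prime p" and "b \<in> {1..p-1}" and "\<forall>j\<in>{1..length \<delta>}. \<not> p dvd psum \<delta> j"
  shows "class_count p b 1 (mset \<delta>) \<le> (b * sum_list \<delta>) mod p + defect_sum p b (mset \<delta>)"
  using assms(3)
proof (induction \<delta> rule: rev_induct)
  case Nil then show ?case by simp
next
  case (snoc y \<delta>)
  have "cumulative p (\<delta> @ [y])"
    using snoc.prems unfolding cumulative_def by blast
  then have "\<forall>j\<in>{1..length \<delta>}. \<not> p dvd psum \<delta> j" and "\<not> p dvd sum_list \<delta> + y"
    unfolding cumulative_snoc by blast+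
  then have IH: "class_count p b 1 (mset \<delta>) \<le> (b * sum_list \<delta>) mod p + defect_sum p b (mset \<delta>)"
    and "(b * (sum_list \<delta> + y)) mod p \<noteq> 0"
    using snoc.IH prime_mult_mod_ne_0[OF assms(1,2)] by blast+
  then have "(b * sum_list \<delta>) mod p + (if (b * y) mod p = 1 then 1 else 0)
      \<le> (b * (sum_list \<delta> + y)) mod p + defect p b y"
    using scaled_sum_step prime_gt_0_nat[OF assms(1)] by blast
  moreover have "class_count p b 1 (mset (\<delta> @ [y]))
      = class_count p b 1 (mset \<delta>) + (if (b * y) mod p = 1 then 1 else 0)"
    by simp
  moreover have "defect_sum p b (mset (\<delta> @ [y])) = defect p b y + defect_sum p b (mset \<delta>)"
    by simp
  ultimately show ?case
    using IH by (simp only: sum_list_append sum_list.Cons sum_list.Nil add_0_right)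
qed

lemma cumulative_imp_admissible:
  assumes "prime p" and "cumulative p \<delta>"
  shows "admissible p (mset \<delta>)"
  unfolding admissible_def
proof (intro conjI ballI)
  obtain \<delta>' x where \<delta>: "\<delta> = \<delta>' @ [x]"
    using assms(2) unfolding cumulative_def by (metis rev_exhaust)
  then show "\<not> p dvd \<Sum>\<^sub># (mset \<delta>)"
    using assms(2) cumulative_snoc by (simp add: sum_mset_sum_list add.commute)
next
  fix b assume b: "b \<in> {1..p-1}"
  have "class_count p b 1 (mset \<delta>) \<le> (b * sum_list \<delta>) mod p + defect_sum p b (mset \<delta>)"
    using class_count_le_scaled_sum[OF assms(1) b] assms(2) unfolding cumulative_def by blast
  moreover have "(b * sum_list \<delta>) mod p \<le> p - 1"
    using prime_gt_0_nat[OF assms(1)] by (simp add: less_Suc_eq_le [symmetric])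
  ultimately show "class_count p b 1 (mset \<delta>) \<le> p - 1 + defect_sum p b (mset \<delta>)"
    by linarith
qed

section \<open>Sufficiency\<close>

lemma class_count_le_Suc_defect_sum:
  assumes "prime p" and "admissible p M" and "b \<in> {1..p-1}" and "(b * \<Sum>\<^sub># M) mod p = 1"
  shows "class_count p b 1 M \<le> defect_sum p b M + 1"
proof (rule ccontr)
  define n D where "n = class_count p b 1 M" and "D = defect_sum p b M"
  assume "\<not> class_count p b 1 M \<le> defect_sum p b M + 1"
  then have gt: "D + 1 < n" by (simp add: n_def D_def)
  have "[D + b * \<Sum>\<^sub># M = n] (mod p)"
    using defect_sum_add_cong prime_gt_0_nat[OF assms(1)] by (simp add: n_def D_def)
  then have "[D + 1 = n] (mod p)"
    using assms(4) by (simp add: cong_def mod_add_right_eq [symmetric, of D])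
  then have "p dvd n - (D + 1)"
    using gt by (simp add: cong_altdef_nat cong_sym_eq)
  moreover have "n \<le> p - 1 + D"
    using assms(2,3) by (simp add: admissible_def n_def D_def)
  ultimately show False
    using gt by (auto dest: dvd_imp_le)
qed

lemma admissible_remove_from_max_class:
  assumes "prime p" and "x \<in># M" and "b \<in> {1..p-1}"
    and max: "\<forall>c\<in>{1..p-1}. class_count p c 1 M \<le> class_count p b 1 M"
    and "\<not> p dvd \<Sum>\<^sub># (M - {#x#})"
    and "class_count p b 1 (M - {#x#}) \<le> p - 1 + defect_sum p b (M - {#x#})"
  shows "admissible p (M - {#x#})"
  unfolding admissible_def
proof (intro conjI ballI)
  fix c assume c: "c \<in> {1..p-1}"
  define M' where "M' = M - {#x#}"
  have M: "M = add_mset x M'"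
    using assms(2) by (simp add: M'_def)
  show "class_count p c 1 (M - {#x#}) \<le> p - 1 + defect_sum p c (M - {#x#})"
  proof (cases "c = b")
    case False
    have "class_count p c 1 M' \<le> class_count p c 1 M"
      by (simp add: M)
    also have "\<dots> \<le> class_count p b 1 M"
      using max c by blast
    also have "\<dots> \<le> class_count p b 1 M' + 1"
      by (simp add: M)
    also have "\<dots> \<le> defect_sum p c M' + 1"
      using class_count_le_defect_sum[OF assms(1,3) c] False by simp
    finally show ?thesis
      using prime_ge_2_nat[OF assms(1)] by (simp add: M'_def)
  qed (use assms(6) in simp)
qed (use assms(5) in simp)

lemma admissible_remove_multiple:
  assumes "prime p" and "admissible p M" and "x \<in># M" and "p dvd x" and "b \<in> {1..p-1}"
    and "\<forall>c\<in>{1..p-1}. class_count p c 1 M \<le> class_count p b 1 M"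
  shows "admissible p (M - {#x#})"
proof (rule admissible_remove_from_max_class[OF assms(1,3,5,6)])
  show "\<not> p dvd \<Sum>\<^sub># (M - {#x#})"
    using assms(2,4) sum_mset.remove[OF assms(3)] by (auto simp: admissible_def dvd_add_right_iff)
  have M: "M = add_mset x (M - {#x#})"
    using assms(3) by simp
  have "(b * x) mod p = 0"
    using assms(4) by (simp add: mod_eq_0_iff_dvd)
  then have "class_count p b 1 (M - {#x#}) = class_count p b 1 M"
    and "defect_sum p b (M - {#x#}) = defect_sum p b M"
    by (subst (2) M, simp add: defect_def)+
  then show "class_count p b 1 (M - {#x#}) \<le> p - 1 + defect_sum p b (M - {#x#})"
    using assms(2,5) by (simp add: admissible_def)
qed

lemma not_dvd_sum_mset_remove:
  fixes b p x :: nat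
  assumes "x \<in># M" and "(b * x) mod p \<noteq> (b * \<Sum>\<^sub># M) mod p"
  shows "\<not> p dvd \<Sum>\<^sub># (M - {#x#})"
proof
  assume "p dvd \<Sum>\<^sub># (M - {#x#})"
  then obtain k where "\<Sum>\<^sub># (M - {#x#}) = p * k"
    by (elim dvdE)
  then have "b * \<Sum>\<^sub># M = b * x + (b * k) * p"
    using sum_mset.remove[OF assms(1)] by (simp add: ring_distribs ac_simps)
  with assms(2) show False
    by simp
qed

lemma admissible_remove_in_max_class:
  assumes "prime p" and "admissible p M" and "x \<in># M" and "b \<in> {1..p-1}"
    and "\<forall>c\<in>{1..p-1}. class_count p c 1 M \<le> class_count p b 1 M"
    and "(b * x) mod p = 1" and "(b * \<Sum>\<^sub># M) mod p \<noteq> 1"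
  shows "admissible p (M - {#x#})"
proof (rule admissible_remove_from_max_class[OF assms(1,3,4,5)])
  show "\<not> p dvd \<Sum>\<^sub># (M - {#x#})"
    using assms(6,7) by (intro not_dvd_sum_mset_remove[OF assms(3), of b]) simp
  define M' where "M' = M - {#x#}"
  have M: "M = add_mset x M'"
    using assms(3) by (simp add: M'_def)
  have "class_count p b 1 M \<le> p - 1 + defect_sum p b M"
    using assms(2,4) by (simp add: admissible_def)
  then show "class_count p b 1 (M - {#x#}) \<le> p - 1 + defect_sum p b (M - {#x#})"
    using assms(6) by (simp add: M M'_def [symmetric] defect_def)
qed

lemma admissible_remove_outside_max_class:
  assumes "prime p" and "admissible p M" and "x \<in># M" and "\<not> p dvd x" and "b \<in> {1..p-1}"
    and "\<forall>c\<in>{1..p-1}. class_count p c 1 M \<le> class_count p b 1 M"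
    and "(b * x) mod p \<noteq> 1" and "(b * \<Sum>\<^sub># M) mod p = 1"
  shows "admissible p (M - {#x#})"
proof (rule admissible_remove_from_max_class[OF assms(1,3,5,6)])
  show "\<not> p dvd \<Sum>\<^sub># (M - {#x#})"
    using assms(7,8) by (intro not_dvd_sum_mset_remove[OF assms(3), of b]) simp
  define M' where "M' = M - {#x#}"
  have M: "M = add_mset x M'"
    using assms(3) by (simp add: M'_def)
  have "class_count p b 1 M' = class_count p b 1 M"
    using assms(7) by (simp add: M)
  also have "\<dots> \<le> defect_sum p b M + 1"
    using class_count_le_Suc_defect_sum[OF assms(1,2,5,8)] .
  also have "\<dots> = defect p b x + defect_sum p b M' + 1"
    by (simp add: M)
  also have "\<dots> \<le> p - 1 + defect_sum p b M'"
    using defect_le[of p b x] defect_pos[OF assms(1,5,4,7)] by linarith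
  finally show "class_count p b 1 (M - {#x#}) \<le> p - 1 + defect_sum p b (M - {#x#})"
    by (simp add: M'_def)
qed

lemma class_count_max_exists:
  assumes "prime p"
  obtains b where "b \<in> {1..p-1}" and "\<forall>c\<in>{1..p-1}. class_count p c 1 M \<le> class_count p b 1 M"
proof -
  let ?counts = "(\<lambda>c. class_count p c 1 M) ` {1..p-1}"
  have "{1..p-1} \<noteq> {}"
    using prime_ge_2_nat[OF assms] by simp
  then have "Max ?counts \<in> ?counts"
    by (intro Max_in) auto
  then obtain b where "b \<in> {1..p-1}" "class_count p b 1 M = Max ?counts"
    by auto
  moreover have "\<forall>c\<in>{1..p-1}. class_count p c 1 M \<le> Max ?counts"
    by simp
  ultimately show ?thesis
    using that by simp
qed

lemma admissible_remove_exists: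
  assumes "prime p" and "admissible p M" and "2 \<le> size M"
  shows "\<exists>x\<in>#M. admissible p (M - {#x#})"
proof -
  let ?U = "{1..p-1}"
  obtain b where b: "b \<in> ?U" and max: "\<forall>c\<in>?U. class_count p c 1 M \<le> class_count p b 1 M"
    using class_count_max_exists[OF assms(1)] .
  consider (multiple) x where "x \<in># M" "p dvd x" | (units) "\<forall>x\<in>#M. \<not> p dvd x"
    by blast
  then show ?thesis
  proof cases
    case multiple
    then show ?thesis
      using admissible_remove_multiple[OF assms(1,2) _ _ b max] by blast
  next
    case units
    show ?thesis
    proof (cases "(b * \<Sum>\<^sub># M) mod p = 1")
      case True
      have "\<exists>x\<in>#M. (b * x) mod p \<noteq> 1"
      proof (rule ccontr)
        assume "\<not> ?thesis"
        then have "class_count p b 1 M = size M \<and> defect_sum p b M = 0"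
          by (induction M) (auto simp: defect_def)
        then show False
          using class_count_le_Suc_defect_sum[OF assms(1,2) b True] assms(3) by simp
      qed
      then show ?thesis
        using admissible_remove_outside_max_class[OF assms(1,2) _ _ b max _ True] units by blast
    next
      case False
      obtain y where "y \<in># M"
        using assms(3) by fastforce
      moreover obtain c where c: "c \<in> ?U" "[y * c = 1] (mod p)"
        using prime_inverse_exists[OF assms(1)] units \<open>y \<in># M\<close> by blast
      ultimately have "0 < class_count p c 1 M"
        unfolding class_count_pos_iff using prime_gt_1_nat[OF assms(1)]
        by (auto simp: cong_def mult.commute)
      also have "\<dots> \<le> class_count p b 1 M"
        using max c(1) by blast
      finally have "\<exists>x\<in>#M. (b * x) mod p = 1"
        unfolding class_count_pos_iff .
      then show ?thesis
        using admissible_remove_in_max_class[OF assms(1,2) _ b max _ False] by blast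
    qed
  qed
qed

lemma admissible_imp_cumulative:
  assumes "prime p" and "admissible p M"
  shows "\<exists>\<delta>. mset \<delta> = M \<and> cumulative p \<delta>"
  using assms(2)
proof (induction "size M" arbitrary: M rule: less_induct)
  case less
  have "size M \<noteq> 0"
    using less.prems by (auto simp: admissible_def)
  then consider (single) "size M = 1" | (more) "2 \<le> size M"
    by linarith
  then show ?case
  proof cases
    case single
    then obtain y where single: "M = {#y#}"
      using size_1_singleton_mset by blast
    then have "cumulative p [y]"
      using less.prems cumulative_snoc[of p "[]" y] by (simp add: admissible_def)
    with single show ?thesis by auto
  next
    case more
    then obtain x where x: "x \<in># M" and "admissible p (M - {#x#})"
      using admissible_remove_exists[OF assms(1) less.prems] by blast
    moreover have "size (M - {#x#}) < size M"
      using x by (rule size_Diff1_less)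
    ultimately obtain \<delta> where \<delta>: "mset \<delta> = M - {#x#}" "cumulative p \<delta>"
      using less.hyps by blast
    have "sum_list \<delta> + x = \<Sum>\<^sub># M"
      using \<delta>(1) sum_mset.remove[OF x] by (simp add: sum_mset_sum_list [symmetric])
    moreover have "\<forall>j\<in>{1..length \<delta>}. \<not> p dvd psum \<delta> j"
      using \<delta>(2) by (simp add: cumulative_def)
    ultimately have "cumulative p (\<delta> @ [x])"
      using less.prems by (simp add: cumulative_snoc admissible_def)
    moreover have "mset (\<delta> @ [x]) = M"
      using \<delta>(1) x by simp
    ultimately show ?thesis by blast
  qed
qed

lemma cumulative_arrangement_iff_admissible:
  assumes "prime p"
  shows "(\<exists>\<delta>. mset \<delta> = M \<and> cumulative p \<delta>) \<longleftrightarrow> admissible p M"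
  using cumulative_imp_admissible[OF assms] admissible_imp_cumulative[OF assms] by blast

section \<open>Translation to the residue vectors\<close>

lemma finite_rearrangements: "finite (rearrangements lam)"
proof (rule finite_subset)
  show "rearrangements lam \<subseteq> {xs. set xs \<subseteq> set lam \<and> length xs = length lam}"
    unfolding rearrangements_def by (auto dest: mset_eq_setD mset_eq_length)
  show "finite {xs. set xs \<subseteq> set lam \<and> length xs = length lam}"
    by (rule finite_lists_length_eq) simp
qed

lemma cnum_ne_0_iff: "cnum q lam \<noteq> 0 \<longleftrightarrow> (\<exists>\<delta>. mset \<delta> = mset lam \<and> cumulative q \<delta>)"
  using finite_rearrangements[of lam]
  by (auto simp: cnum_def rearrangements_def)

lemma rvec_eq_size_filter: "rvec q \<delta> j = size {#y \<in># mset \<delta>. [y = j] (mod q)#}"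
proof -
  have "nmult i \<delta> = count (mset \<delta>) i" for i
  proof -
    have "nmult i \<delta> = length (filter (\<lambda>x. x = i) \<delta>)"
      by (simp add: nmult_def length_filter_conv_card)
    then show ?thesis
      by (metis count_conv_size_mset mset_filter size_mset)
  qed
  then have "rvec q \<delta> j = (\<Sum>i\<in>set_mset {#y \<in># mset \<delta>. [y = j] (mod q)#}.
      count {#y \<in># mset \<delta>. [y = j] (mod q)#} i)"
    unfolding rvec_def by (intro sum.cong) auto
  then show ?thesis
    by (simp add: size_multiset_overloaded_eq)
qed

lemma rvec_eq_class_count:
  assumes "coprime b p" and "i < p" and "[i = b * j] (mod p)"
  shows "rvec p lam j = class_count p b i (mset lam)"
proof -
  have "[y = j] (mod p) \<longleftrightarrow> (b * y) mod p = i" for y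
  proof -
    have "[y = j] (mod p) \<longleftrightarrow> [b * y = b * j] (mod p)"
      using assms(1) by (simp add: cong_mult_lcancel_nat)
    also have "\<dots> \<longleftrightarrow> [b * y = i] (mod p)"
      using assms(3) by (meson cong_sym cong_trans)
    finally show ?thesis
      using assms(2) by (simp add: cong_def)
  qed
  then show ?thesis
    by (simp add: rvec_eq_size_filter class_count_def)
qed

lemma ex1_unit_cong_mult:
  fixes p b i :: nat
  assumes "prime p" and "b \<in> {1..p-1}" and "i \<in> {1..p-1}"
  shows "\<exists>!j. j \<in> {1..p-1} \<and> [i = b * j] (mod p)"
proof -
  have cop: "coprime b p"
    using coprime_if_in_units[OF assms(1,2)] .
  then obtain x where x: "[b * x = i] (mod p)"
    using cong_solve_dvd_nat[of b p i] by auto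
  have "[b * (x mod p) = i] (mod p)"
    using x by (simp add: cong_def mod_mult_right_eq)
  moreover have "x mod p \<noteq> 0"
  proof
    assume "x mod p = 0"
    with calculation have "[i = 0] (mod p)"
      by (simp add: cong_sym_eq)
    with not_dvd_if_in_units[OF assms(3)] show False
      by (simp add: cong_0_iff)
  qed
  moreover have "x mod p < p"
    using prime_gt_0_nat[OF assms(1)] by simp
  ultimately have "x mod p \<in> {1..p-1} \<and> [i = b * (x mod p)] (mod p)"
    by (auto simp: cong_sym_eq)
  moreover have "j = k" if "j \<in> {1..p-1}" "k \<in> {1..p-1}"
      "[i = b * j] (mod p)" "[i = b * k] (mod p)" for j k
  proof -
    have "[b * j = b * k] (mod p)"
      using that(3,4) by (meson cong_sym cong_trans)
    then show ?thesis
      using that(1,2) cop by (auto simp: cong_mult_lcancel_nat intro: cong_less_modulus_unique_nat)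
  qed
  ultimately show ?thesis by blast
qed

lemma twist_rvec:
  assumes "prime p" and "b \<in> {1..p-1}" and "i \<in> {1..p-1}"
  shows "twist p b (rvec p lam) i = class_count p b i (mset lam)"
proof -
  define j where "j = (THE j. j \<in> {1..p-1} \<and> [i = b * j] (mod p))"
  have "[i = b * j] (mod p)"
    unfolding j_def using theI'[OF ex1_unit_cong_mult[OF assms]] by blast
  moreover have "coprime b p"
    using coprime_if_in_units[OF assms(1,2)] .
  ultimately have "rvec p lam j = class_count p b i (mset lam)"
    using assms(3) by (intro rvec_eq_class_count) auto
  then show ?thesis
    by (simp add: twist_def j_def)
qed

lemma defect_sum_eq_class_sum:
  "defect_sum p b M = (\<Sum>i=2..p-1. (p - i) * class_count p b i M)" if "0 < p"
proof (induction M)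
  case empty then show ?case by simp
next
  case (add y M)
  define r where "r = (b * y) mod p"
  have "(\<Sum>i=2..p-1. (p - i) * (if r = i then 1 else 0)) = (\<Sum>i=2..p-1. if r = i then p - i else 0)"
    by (rule sum.cong) auto
  also have "\<dots> = (if r \<in> {2..p-1} then p - r else 0)"
    by simp
  also have "\<dots> = defect p b y"
    using that by (auto simp: defect_def r_def)
  finally show ?case
    using add.IH by (simp add: sum.distrib distrib_left r_def)
qed

lemma qnorm_twist_rvec:
  assumes "prime p" and "b \<in> {1..p-1}"
  shows "qnorm p (twist p b (rvec p lam)) = p - 1 + defect_sum p b (mset lam)"
  using twist_rvec[OF assms] defect_sum_eq_class_sum prime_gt_0_nat[OF assms(1)]
  unfolding qnorm_def by simp

lemma rvec_eq_class_count_inverse: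
  assumes "prime p" and "b \<in> {1..p-1}" and "[a * b = 1] (mod p)"
  shows "rvec p lam a = class_count p b 1 (mset lam)"
proof (rule rvec_eq_class_count)
  show "coprime b p"
    using coprime_if_in_units[OF assms(1,2)] .
  show "1 < p"
    using prime_gt_1_nat[OF assms(1)] .
  show "[1 = b * a] (mod p)"
    using assms(3) by (simp add: cong_sym_eq mult.commute)
qed

lemma rvec_image_units:
  assumes "prime p"
  shows "rvec p lam ` {1..p-1} = (\<lambda>b. class_count p b 1 (mset lam)) ` {1..p-1}"
proof (intro equalityI image_subsetI)
  fix a assume "a \<in> {1..p-1}"
  then obtain b where "b \<in> {1..p-1}" "[a * b = 1] (mod p)"
    using prime_inverse_exists[OF assms not_dvd_if_in_units] by blast
  then show "rvec p lam a \<in> (\<lambda>b. class_count p b 1 (mset lam)) ` {1..p-1}"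
    using rvec_eq_class_count_inverse[OF assms] by auto
next
  fix b assume "b \<in> {1..p-1}"
  moreover obtain a where "a \<in> {1..p-1}" "[b * a = 1] (mod p)"
    using prime_inverse_exists[OF assms not_dvd_if_in_units[OF \<open>b \<in> {1..p-1}\<close>]] by blast
  moreover have "[a * b = 1] (mod p)"
    using \<open>[b * a = 1] (mod p)\<close> by (simp add: mult.commute)
  ultimately show "class_count p b 1 (mset lam) \<in> rvec p lam ` {1..p-1}"
    using rvec_eq_class_count_inverse[OF assms] by (metis image_eqI)
qed

lemma rvec_eq_vmax_iff:
  assumes "prime p" and "a \<in> {1..p-1}" and "b \<in> {1..p-1}" and "[a * b = 1] (mod p)"
  shows "rvec p lam a = vmax p (rvec p lam) \<longleftrightarrow>
    (\<forall>c\<in>{1..p-1}. class_count p c 1 (mset lam) \<le> class_count p b 1 (mset lam))"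
proof -
  have "rvec p lam a = Max (rvec p lam ` {1..p-1}) \<longleftrightarrow> (\<forall>v\<in>rvec p lam ` {1..p-1}. v \<le> rvec p lam a)"
    using Max_eq_iff[of "rvec p lam ` {1..p-1}" "rvec p lam a"] assms(2) by auto
  also have "\<dots> \<longleftrightarrow> (\<forall>v\<in>(\<lambda>c. class_count p c 1 (mset lam)) ` {1..p-1}. v \<le> class_count p b 1 (mset lam))"
    unfolding rvec_image_units[OF assms(1)] rvec_eq_class_count_inverse[OF assms(1,3,4)] ..
  finally show ?thesis
    by (simp add: vmax_def)
qed

lemma admissible_iff_max_class:
  assumes "prime p"
  shows "admissible p M \<longleftrightarrow> \<not> p dvd \<Sum>\<^sub># M \<and>
    (\<exists>b\<in>{1..p-1}. (\<forall>c\<in>{1..p-1}. class_count p c 1 M \<le> class_count p b 1 M) \<and>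
       class_count p b 1 M \<le> p - 1 + defect_sum p b M)"
proof
  assume "admissible p M"
  moreover obtain b where "b \<in> {1..p-1}" "\<forall>c\<in>{1..p-1}. class_count p c 1 M \<le> class_count p b 1 M"
    using class_count_max_exists[OF assms] .
  ultimately show "\<not> p dvd \<Sum>\<^sub># M \<and> (\<exists>b\<in>{1..p-1}.
      (\<forall>c\<in>{1..p-1}. class_count p c 1 M \<le> class_count p b 1 M) \<and>
      class_count p b 1 M \<le> p - 1 + defect_sum p b M)"
    unfolding admissible_def by blast
next
  assume "\<not> p dvd \<Sum>\<^sub># M \<and> (\<exists>b\<in>{1..p-1}.
      (\<forall>c\<in>{1..p-1}. class_count p c 1 M \<le> class_count p b 1 M) \<and>
      class_count p b 1 M \<le> p - 1 + defect_sum p b M)"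
  then obtain b where "\<not> p dvd \<Sum>\<^sub># M" and b: "b \<in> {1..p-1}"
    and max: "\<forall>c\<in>{1..p-1}. class_count p c 1 M \<le> class_count p b 1 M"
    and "class_count p b 1 M \<le> p - 1 + defect_sum p b M"
    by blast
  show "admissible p M"
    unfolding admissible_def
  proof (intro conjI ballI)
    fix c assume c: "c \<in> {1..p-1}"
    show "class_count p c 1 M \<le> p - 1 + defect_sum p c M"
    proof (cases "c = b")
      case False
      have "class_count p c 1 M \<le> class_count p b 1 M"
        using max c by blast
      also have "\<dots> \<le> defect_sum p c M"
        using class_count_le_defect_sum[OF assms b c] False by simp
      finally show ?thesis by simp
    qed (use \<open>class_count p b 1 M \<le> p - 1 + defect_sum p b M\<close> in simp)
  qed fact
qed

lemma max_class_condition_iff_rvec: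
  assumes "prime p"
  shows "(\<exists>b\<in>{1..p-1}. (\<forall>c\<in>{1..p-1}. class_count p c 1 (mset lam) \<le> class_count p b 1 (mset lam)) \<and>
      class_count p b 1 (mset lam) \<le> p - 1 + defect_sum p b (mset lam))
    \<longleftrightarrow> (\<exists>a\<in>{1..p-1}. rvec p lam a = vmax p (rvec p lam) \<and>
      (\<exists>b\<in>{1..p-1}. [a * b = 1] (mod p) \<and> vmax p (rvec p lam) \<le> qnorm p (twist p b (rvec p lam))))"
    (is "?max \<longleftrightarrow> ?twisted")
proof
  assume ?max
  then obtain b where b: "b \<in> {1..p-1}"
    and max: "\<forall>c\<in>{1..p-1}. class_count p c 1 (mset lam) \<le> class_count p b 1 (mset lam)"
    and le: "class_count p b 1 (mset lam) \<le> p - 1 + defect_sum p b (mset lam)"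
    by blast
  obtain a where a: "a \<in> {1..p-1}" "[b * a = 1] (mod p)"
    using prime_inverse_exists[OF assms not_dvd_if_in_units[OF b]] .
  then have ab: "[a * b = 1] (mod p)"
    by (simp add: mult.commute)
  have "rvec p lam a = vmax p (rvec p lam)"
    using rvec_eq_vmax_iff[OF assms a(1) b ab] max by blast
  moreover have "vmax p (rvec p lam) \<le> qnorm p (twist p b (rvec p lam))"
    using calculation le rvec_eq_class_count_inverse[OF assms b ab] qnorm_twist_rvec[OF assms b]
    by simp
  ultimately show ?twisted
    using a(1) b ab by blast
next
  assume ?twisted
  then obtain a b where ab: "a \<in> {1..p-1}" "b \<in> {1..p-1}" "[a * b = 1] (mod p)"
    and max: "rvec p lam a = vmax p (rvec p lam)"
    and le: "vmax p (rvec p lam) \<le> qnorm p (twist p b (rvec p lam))"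
    by blast
  have "class_count p b 1 (mset lam) \<le> p - 1 + defect_sum p b (mset lam)"
    using max le rvec_eq_class_count_inverse[OF assms ab(2,3)] qnorm_twist_rvec[OF assms ab(2)]
    by simp
  then show ?max
    using rvec_eq_vmax_iff[OF assms ab] max ab(2) by blast
qed

theorem theorem1:
  fixes p :: nat and lam :: "nat list"
  assumes "prime p" and "is_partition lam"
  shows "cnum p lam \<noteq> 0 \<longleftrightarrow>
    (\<not> p dvd sum_list lam \<and>
     (\<exists>a\<in>{1..p-1}. rvec p lam a = vmax p (rvec p lam) \<and>
        (\<exists>b\<in>{1..p-1}. [a * b = 1] (mod p) \<and>
           vmax p (rvec p lam) \<le> qnorm p (twist p b (rvec p lam)))))"
proof -
  have "cnum p lam \<noteq> 0 \<longleftrightarrow> admissible p (mset lam)"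
    unfolding cnum_ne_0_iff cumulative_arrangement_iff_admissible[OF assms(1)] ..
  also have "\<dots> \<longleftrightarrow> \<not> p dvd sum_list lam \<and> (\<exists>b\<in>{1..p-1}.
      (\<forall>c\<in>{1..p-1}. class_count p c 1 (mset lam) \<le> class_count p b 1 (mset lam)) \<and>
      class_count p b 1 (mset lam) \<le> p - 1 + defect_sum p b (mset lam))"
    by (simp add: admissible_iff_max_class[OF assms(1)] sum_mset_sum_list)
  finally show ?thesis
    unfolding max_class_condition_iff_rvec[OF assms(1)] .
qed

end
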